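(* Let $U=\{u_1,\dots,u_{3n}\}$ with $n\ge1$ and let $\mathcal{S}=\{S_1,\dots,S_p\}$, $p\ge 1$, be a family of $3$-element subsets of $U$. Fix an integer $m\ge 6n+3p$. Build the labeled complete bipartite graph $G$ with partite sets $V_1=\{x_1,\dots,x_{3n}\}\cup\{x(S_1),\dots,x(S_p)\}$ and $V_2=\{y_1,\dots,y_{3n}\}\cup\{y_k(S_i):1\le i\le p,\,1\le k\le m\}\cup\{z_1,\dots,z_{3n}\}$, with labels: $x_iy_j$ is $+$ iff $i=j$ or $u_i,u_j$ lie in a common member of $\mathcal{S}$; $x(S_i)y_k(S_\ell)$ is $+$ iff $i=\ell$; $x_iy_k(S_j)$ and $x(S_j)y_i$ are $+$ iff $u_i\in S_j$; $x_iz_j$ is $+$ for all $i,j$; $x(S_i)z_j$ is $-$ for all $i,j$. Assign tolerances $t_{x(S_i)}=3$ and $t_{x_i}=m(d(u_i)-1)+(c(u_i)-2)+(3n-3)$, where $d(u_i)$ is the number of members of $\mathcal{S}$ containing $u_i$ and $c(u_i)$ is the number of $u_j\in U\setminus\{u_i\}$ lying in a common member of $\mathcal{S}$ with $u_i$. Then $G$ has a clustering in which each $v\in V_1$ has at most $t_v$ incident errors if and only if there is a subfamily $\mathcal{S}'\subseteq\mathcal{S}$ such that each element of $U$ lies in exactly one member of $\mathcal{S}'$.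
   Context: A clustering is a partition of $V(G)$. An error at a vertex $v$ is an incident edge that is a $+$ edge between different clusters or a $-$ edge within a cluster. *)

theory Defs
  imports Main "HOL-Library.Disjoint_Sets"
begin

(* Generic notions: a signed graph on vertex set V with adjacency E and
   sign predicate pos (True = '+' edge).  A clustering is a partition of V. *)

definition same_cluster :: "'a set set \<Rightarrow> 'a \<Rightarrow> 'a \<Rightarrow> bool" where
  "same_cluster P u v = (\<exists>C\<in>P. u \<in> C \<and> v \<in> C)"

definition errors_at ::
  "'a set \<Rightarrow> ('a \<Rightarrow> 'a \<Rightarrow> bool) \<Rightarrow> ('a \<Rightarrow> 'a \<Rightarrow> bool) \<Rightarrow> 'a set set \<Rightarrow> 'a \<Rightarrow> nat" where
  "errors_at V E pos P v =
     card {w \<in> V. E v w \<and>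
        ((pos v w \<and> \<not> same_cluster P v w) \<or> (\<not> pos v w \<and> same_cluster P v w))}"

(* Vertices of the construction (indices are 1-based as in the paper):
   X i = x_i, XS i = x(S_i), Y j = y_j, YS i k = y_k(S_i), Z j = z_j *)
datatype vtx = X nat | XS nat | Y nat | YS nat nat | Z nat

definition V1 :: "nat \<Rightarrow> nat \<Rightarrow> vtx set" where
  "V1 n p = X ` {1..3*n} \<union> XS ` {1..p}"

definition V2 :: "nat \<Rightarrow> nat \<Rightarrow> nat \<Rightarrow> vtx set" where
  "V2 n p m = Y ` {1..3*n} \<union> {YS i k | i k. i \<in> {1..p} \<and> k \<in> {1..m}} \<union> Z ` {1..3*n}"

definition adjG :: "nat \<Rightarrow> nat \<Rightarrow> nat \<Rightarrow> vtx \<Rightarrow> vtx \<Rightarrow> bool" where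
  "adjG n p m u v = ((u \<in> V1 n p \<and> v \<in> V2 n p m) \<or> (u \<in> V2 n p m \<and> v \<in> V1 n p))"

(* label of an edge (V1-end first); True = '+' *)
fun lab :: "nat \<Rightarrow> (nat \<Rightarrow> nat set) \<Rightarrow> vtx \<Rightarrow> vtx \<Rightarrow> bool" where
  "lab p S (X i) (Y j) = (i = j \<or> (\<exists>l\<in>{1..p}. i \<in> S l \<and> j \<in> S l))"
| "lab p S (XS i) (YS l k) = (i = l)"
| "lab p S (X i) (YS j k) = (i \<in> S j)"
| "lab p S (XS j) (Y i) = (i \<in> S j)"
| "lab p S (X i) (Z j) = True"
| "lab p S (XS i) (Z j) = False"
| "lab p S _ _ = False"

definition posG :: "nat \<Rightarrow> (nat \<Rightarrow> nat set) \<Rightarrow> vtx \<Rightarrow> vtx \<Rightarrow> bool" where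
  "posG p S u v = (lab p S u v \<or> lab p S v u)"

definition dS :: "nat \<Rightarrow> (nat \<Rightarrow> nat set) \<Rightarrow> nat \<Rightarrow> nat" where
  "dS p S i = card {l \<in> {1..p}. i \<in> S l}"

definition cS :: "nat \<Rightarrow> nat \<Rightarrow> (nat \<Rightarrow> nat set) \<Rightarrow> nat \<Rightarrow> nat" where
  "cS n p S i = card {j \<in> {1..3*n} - {i}. \<exists>l\<in>{1..p}. i \<in> S l \<and> j \<in> S l}"

(* tolerances of vertices in V1 (as integers: may be negative) *)
fun tol :: "nat \<Rightarrow> nat \<Rightarrow> nat \<Rightarrow> (nat \<Rightarrow> nat set) \<Rightarrow> vtx \<Rightarrow> int" where
  "tol n p m S (XS i) = 3"
| "tol n p m S (X i) = int m * (int (dS p S i) - 1) + (int (cS n p S i) - 2) + (3 * int n - 3)"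
| "tol n p m S _ = 0"

end

theory Submission
  imports Defs
begin

text \<open>Each \<open>x(S\<^sub>l)\<close> can afford only three errors, so it keeps almost all of its \<open>m\<close> private
  neighbours \<open>y\<^sub>k(S\<^sub>l)\<close>. Hence distinct \<open>x(S\<^sub>l)\<close> lie in distinct clusters, and an \<open>x\<^sub>i\<close>
  sharing a cluster with no \<open>x(S\<^sub>l)\<close>, \<open>u\<^sub>i \<in> S\<^sub>l\<close>, would lose about \<open>m d(u\<^sub>i)\<close> positive
  edges, more than its tolerance. Once \<open>x\<^sub>i\<close> sits with such an \<open>x(S\<^sub>l)\<close>, its tolerance
  leaves no slack beyond what the budget of \<open>x(S\<^sub>l)\<close> absorbs, which forces every
  \<open>y\<^sub>j\<close>, \<open>u\<^sub>j \<in> S\<^sub>l\<close>, into that cluster. Since \<open>y\<^sub>i\<close> lies in a single cluster, the sets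
  \<open>S\<^sub>l\<close> whose cluster contains some \<open>x\<^sub>i\<close> form an exact cover. Conversely, an exact cover
  gives one cluster per \<open>S\<^sub>l\<close>, with \<open>x\<^sub>i, y\<^sub>i, z\<^sub>i\<close> placed by the chosen set containing \<open>u\<^sub>i\<close>.\<close>

lemma same_cluster_sym: "same_cluster P u v \<Longrightarrow> same_cluster P v u"
  unfolding same_cluster_def by blast

lemma same_cluster_trans:
  assumes "partition_on A P" "same_cluster P u v" "same_cluster P v w"
  shows "same_cluster P u w"
  using assms unfolding partition_on_def disjoint_def same_cluster_def by blast

lemma partition_on_fibres:
  assumes "g ` A = K"
  shows "partition_on A ((\<lambda>k. {a \<in> A. g a = k}) ` K)"
  using assms by (intro partition_onI) (auto simp: disjnt_def)

lemma same_cluster_fibres: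
  assumes "g ` A \<subseteq> K" "u \<in> A" "w \<in> A"
  shows "same_cluster ((\<lambda>k. {a \<in> A. g a = k}) ` K) u w \<longleftrightarrow> g u = g w"
  using assms unfolding same_cluster_def by auto

definition error_set ::
  "'a set \<Rightarrow> ('a \<Rightarrow> 'a \<Rightarrow> bool) \<Rightarrow> ('a \<Rightarrow> 'a \<Rightarrow> bool) \<Rightarrow> 'a set set \<Rightarrow> 'a \<Rightarrow> 'a set" where
  "error_set V E pos P v = {w \<in> V. E v w \<and>
     ((pos v w \<and> \<not> same_cluster P v w) \<or> (\<not> pos v w \<and> same_cluster P v w))}"

lemma errors_at_eq_card_error_set: "errors_at V E pos P v = card (error_set V E pos P v)"
  by (simp add: errors_at_def error_set_def)

lemma finite_error_set: "finite V \<Longrightarrow> finite (error_set V E pos P v)"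
  by (simp add: error_set_def)

lemma errors_at_le_card:
  "finite B \<Longrightarrow> error_set V E pos P v \<subseteq> B \<Longrightarrow> errors_at V E pos P v \<le> card B"
  unfolding errors_at_eq_card_error_set by (rule card_mono)

lemma in_V1_iff [simp]:
  "X i \<in> V1 n p \<longleftrightarrow> i \<in> {1..3*n}" "XS l \<in> V1 n p \<longleftrightarrow> l \<in> {1..p}"
  "Y j \<notin> V1 n p" "YS a k \<notin> V1 n p" "Z j \<notin> V1 n p"
  by (auto simp: V1_def)

lemma in_V2_iff [simp]:
  "X i \<notin> V2 n p m" "XS l \<notin> V2 n p m" "Y j \<in> V2 n p m \<longleftrightarrow> j \<in> {1..3*n}"
  "YS a k \<in> V2 n p m \<longleftrightarrow> a \<in> {1..p} \<and> k \<in> {1..m}" "Z j \<in> V2 n p m \<longleftrightarrow> j \<in> {1..3*n}"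
  by (auto simp: V2_def)

lemma V1_V2_disjoint: "v \<in> V1 n p \<Longrightarrow> v \<notin> V2 n p m"
  by (cases v) simp_all

lemma posG_simps [simp]:
  "posG p S (X i) (Y j) \<longleftrightarrow> i = j \<or> (\<exists>l\<in>{1..p}. i \<in> S l \<and> j \<in> S l)"
  "posG p S (X i) (YS a k) \<longleftrightarrow> i \<in> S a"
  "posG p S (X i) (Z j)"
  "posG p S (XS l) (Y j) \<longleftrightarrow> j \<in> S l"
  "posG p S (XS l) (YS a k) \<longleftrightarrow> l = a"
  "\<not> posG p S (XS l) (Z j)"
  by (simp_all add: posG_def)

lemma card_image_YS: "card ((\<lambda>(a, k). YS a k) ` A) = card A"
  by (rule card_image) (auto simp: inj_on_def)

lemma finite_V1: "finite (V1 n p)"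
  by (simp add: V1_def)

lemma finite_V2: "finite (V2 n p m)"
proof -
  have "{YS i k | i k. i \<in> {1..p} \<and> k \<in> {1..m}} = (\<lambda>(i, k). YS i k) ` ({1..p} \<times> {1..m})"
    by auto
  then show ?thesis
    by (simp add: V2_def)
qed

locale x3c_reduction =
  fixes n p m :: nat and S :: "nat \<Rightarrow> nat set"
  assumes n_pos: "n \<ge> 1"
    and S_subset: "l \<in> {1..p} \<Longrightarrow> S l \<subseteq> {1..3*n}"
    and card_S: "l \<in> {1..p} \<Longrightarrow> card (S l) = 3"
    and m_large: "m \<ge> 6*n + 3*p"
begin

abbreviation V :: "vtx set" where
  "V \<equiv> V1 n p \<union> V2 n p m"

abbreviation err :: "vtx set set \<Rightarrow> vtx \<Rightarrow> vtx set" where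
  "err P v \<equiv> error_set V (adjG n p m) (posG p S) P v"

abbreviation errors :: "vtx set set \<Rightarrow> vtx \<Rightarrow> nat" where
  "errors P v \<equiv> errors_at V (adjG n p m) (posG p S) P v"

abbreviation tolerant :: "vtx set set \<Rightarrow> bool" where
  "tolerant P \<equiv> \<forall>v\<in>V1 n p. int (errors P v) \<le> tol n p m S v"

lemma finite_V: "finite V"
  by (simp add: finite_V1 finite_V2)

lemma mem_err_iff:
  "v \<in> V1 n p \<Longrightarrow> w \<in> err P v \<longleftrightarrow> w \<in> V2 n p m \<and> (posG p S v w \<longleftrightarrow> \<not> same_cluster P v w)"
  using V1_V2_disjoint by (auto simp: error_set_def adjG_def)

lemma finite_S: "l \<in> {1..p} \<Longrightarrow> finite (S l)"
  using S_subset finite_subset by blast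

definition sets_containing :: "nat \<Rightarrow> nat set" where
  "sets_containing i = {l \<in> {1..p}. i \<in> S l}"

definition pos_Y_neighbours :: "nat \<Rightarrow> nat set" where
  "pos_Y_neighbours i = {j \<in> {1..3*n}. j = i \<or> (\<exists>l\<in>{1..p}. i \<in> S l \<and> j \<in> S l)}"

lemma finite_sets_containing: "finite (sets_containing i)"
  by (simp add: sets_containing_def)

lemma card_sets_containing: "card (sets_containing i) = dS p S i"
  by (simp add: sets_containing_def dS_def)

lemma dS_pos:
  assumes "l \<in> {1..p}" "i \<in> S l"
  shows "dS p S i \<ge> 1"
proof -
  have "l \<in> sets_containing i"
    using assms by (simp add: sets_containing_def)
  then have "card (sets_containing i) > 0"
    using finite_sets_containing card_gt_0_iff by blast
  then show ?thesis
    by (simp add: card_sets_containing)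
qed

lemma card_sets_containing_le: "card (sets_containing i) \<le> p"
proof -
  have "card (sets_containing i) \<le> card {1..p}"
    by (rule card_mono) (auto simp: sets_containing_def)
  then show ?thesis
    by simp
qed

lemma finite_pos_Y_neighbours: "finite (pos_Y_neighbours i)"
  by (simp add: pos_Y_neighbours_def)

lemma card_pos_Y_neighbours:
  assumes "i \<in> {1..3*n}"
  shows "card (pos_Y_neighbours i) = cS n p S i + 1"
proof -
  have "pos_Y_neighbours i = insert i {j \<in> {1..3*n} - {i}. \<exists>l\<in>{1..p}. i \<in> S l \<and> j \<in> S l}"
    using assms by (auto simp: pos_Y_neighbours_def)
  then show ?thesis
    by (simp add: cS_def)
qed

lemma card_pos_Y_neighbours_le: "card (pos_Y_neighbours i) \<le> 3*n"
proof -
  have "card (pos_Y_neighbours i) \<le> card {1..3*n}"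
    by (rule card_mono) (auto simp: pos_Y_neighbours_def)
  then show ?thesis
    by simp
qed

lemma S_subset_pos_Y_neighbours: "l \<in> {1..p} \<Longrightarrow> i \<in> S l \<Longrightarrow> S l \<subseteq> pos_Y_neighbours i"
  using S_subset unfolding pos_Y_neighbours_def by blast

subsection \<open>From a tolerant clustering to an exact cover\<close>

definition YS_missed :: "vtx set set \<Rightarrow> nat \<Rightarrow> nat set" where
  "YS_missed P l = {k \<in> {1..m}. \<not> same_cluster P (XS l) (YS l k)}"

definition foreign_YS_joined :: "vtx set set \<Rightarrow> nat \<Rightarrow> (nat \<times> nat) set" where
  "foreign_YS_joined P l =
     {(a, k). a \<in> {1..p} \<and> a \<noteq> l \<and> k \<in> {1..m} \<and> same_cluster P (XS l) (YS a k)}"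

definition Z_joined :: "vtx set set \<Rightarrow> nat \<Rightarrow> nat set" where
  "Z_joined P l = {j \<in> {1..3*n}. same_cluster P (XS l) (Z j)}"

definition Y_joined :: "vtx set set \<Rightarrow> nat \<Rightarrow> nat set" where
  "Y_joined P l = {j \<in> {1..3*n}. same_cluster P (XS l) (Y j)}"

lemma finite_joined:
  "finite (YS_missed P l)" "finite (foreign_YS_joined P l)"
  "finite (Z_joined P l)" "finite (Y_joined P l)"
proof -
  have "foreign_YS_joined P l \<subseteq> {1..p} \<times> {1..m}"
    by (auto simp: foreign_YS_joined_def)
  then show "finite (foreign_YS_joined P l)"
    by (rule finite_subset) simp
qed (simp_all add: YS_missed_def Z_joined_def Y_joined_def)

context
  fixes P
  assumes partition: "partition_on V P" and tolerant: "tolerant P"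
begin

lemma card_err_le_tol:
  assumes "v \<in> V1 n p" "A \<subseteq> err P v"
  shows "int (card A) \<le> tol n p m S v"
proof -
  have "card A \<le> errors P v"
    unfolding errors_at_eq_card_error_set
    by (rule card_mono[OF finite_error_set[OF finite_V] assms(2)])
  moreover have "int (errors P v) \<le> tol n p m S v"
    using tolerant assms(1) by blast
  ultimately show ?thesis
    by linarith
qed

lemma XS_error_budget:
  assumes l: "l \<in> {1..p}"
  shows "card (YS_missed P l) + card (foreign_YS_joined P l) + card (Z_joined P l)
           + card (S l - Y_joined P l) + card (Y_joined P l - S l) \<le> 3"
proof -
  let ?E = "YS l ` YS_missed P l \<union> (\<lambda>(a, k). YS a k) ` foreign_YS_joined P l
            \<union> Z ` Z_joined P l \<union> Y ` (S l - Y_joined P l) \<union> Y ` (Y_joined P l - S l)"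
  have E_err: "?E \<subseteq> err P (XS l)"
  proof (intro Un_least)
    show "YS l ` YS_missed P l \<subseteq> err P (XS l)"
      using l by (auto simp: mem_err_iff YS_missed_def)
    show "(\<lambda>(a, k). YS a k) ` foreign_YS_joined P l \<subseteq> err P (XS l)"
      using l by (clarsimp simp: mem_err_iff foreign_YS_joined_def)
    show "Z ` Z_joined P l \<subseteq> err P (XS l)"
      using l by (auto simp: mem_err_iff Z_joined_def)
    show "Y ` (S l - Y_joined P l) \<subseteq> err P (XS l)"
      using l S_subset[OF l] by (auto simp: mem_err_iff Y_joined_def)
    show "Y ` (Y_joined P l - S l) \<subseteq> err P (XS l)"
      using l by (auto simp: mem_err_iff Y_joined_def)
  qed
  have "int (card ?E) \<le> 3"
    using card_err_le_tol[OF _ E_err] l by simp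
  moreover have "card ?E = card (YS_missed P l) + card (foreign_YS_joined P l)
      + card (Z_joined P l) + card (S l - Y_joined P l) + card (Y_joined P l - S l)"
    using finite_joined finite_S[OF l]
    by (subst card_Un_disjoint; auto simp: card_image inj_on_def card_image_YS foreign_YS_joined_def)+
  ultimately show ?thesis
    by linarith
qed

text \<open>The positive neighbours of \<open>X i\<close> outside the cluster of \<open>XS l\<close> are errors at \<open>X i\<close>.\<close>
lemma X_errors_with_XS:
  assumes l: "l \<in> {1..p}" and i: "i \<in> S l" and cl: "same_cluster P (X i) (XS l)"
  shows "(dS p S i - 1) * m + 3*n + card (pos_Y_neighbours i)
           \<le> card (err P (X i)) + card (foreign_YS_joined P l) + card (Z_joined P l)
              + card (Y_joined P l)"
proof -
  have i_range: "i \<in> {1..3*n}"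
    using S_subset[OF l] i by auto
  have to_XS: "same_cluster P (XS l) w" if "same_cluster P (X i) w" for w
    using same_cluster_trans[OF partition same_cluster_sym[OF cl] that] .
  define T where "T = (sets_containing i - {l}) \<times> {1..m}"
  let ?E = "(\<lambda>(a, k). YS a k) ` (T - foreign_YS_joined P l) \<union> Z ` ({1..3*n} - Z_joined P l)
            \<union> Y ` (pos_Y_neighbours i - Y_joined P l)"
  have "?E \<subseteq> err P (X i)"
  proof (intro Un_least)
    show "(\<lambda>(a, k). YS a k) ` (T - foreign_YS_joined P l) \<subseteq> err P (X i)"
      using i_range to_XS by (clarsimp simp: mem_err_iff T_def sets_containing_def foreign_YS_joined_def)
    show "Z ` ({1..3*n} - Z_joined P l) \<subseteq> err P (X i)"
      using i_range to_XS by (auto simp: mem_err_iff Z_joined_def)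
    show "Y ` (pos_Y_neighbours i - Y_joined P l) \<subseteq> err P (X i)"
      using i_range to_XS by (auto simp: mem_err_iff pos_Y_neighbours_def Y_joined_def)
  qed
  then have "card ?E \<le> card (err P (X i))"
    by (rule card_mono[OF finite_error_set[OF finite_V]])
  moreover have "card ?E = card (T - foreign_YS_joined P l) + card ({1..3*n} - Z_joined P l)
      + card (pos_Y_neighbours i - Y_joined P l)"
    using finite_pos_Y_neighbours finite_sets_containing
    by (subst card_Un_disjoint; auto simp: card_image inj_on_def card_image_YS T_def)+
  moreover have "card T = (dS p S i - 1) * m"
    using l i by (simp add: T_def card_cartesian_product finite_sets_containing sets_containing_def
        flip: card_sets_containing)
  moreover have "card T - card (foreign_YS_joined P l) \<le> card (T - foreign_YS_joined P l)"
    "card (pos_Y_neighbours i) - card (Y_joined P l) \<le> card (pos_Y_neighbours i - Y_joined P l)"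
    by (rule diff_card_le_card_Diff, rule finite_joined)+
  moreover have "3*n - card (Z_joined P l) \<le> card ({1..3*n} - Z_joined P l)"
    using diff_card_le_card_Diff[OF finite_joined(3), of "{1..3*n}"] by simp
  ultimately show ?thesis
    by linarith
qed

lemma S_subset_Y_joined:
  assumes l: "l \<in> {1..p}" and i: "i \<in> S l" and cl: "same_cluster P (X i) (XS l)"
  shows "S l \<subseteq> Y_joined P l"
proof -
  have i_range: "i \<in> {1..3*n}"
    using S_subset[OF l] i by auto
  have "int (card (err P (X i)))
      \<le> int m * (int (dS p S i) - 1) + (int (cS n p S i) - 2) + (3 * int n - 3)"
    using card_err_le_tol[of "X i" "err P (X i)"] i_range by simp
  moreover have "int ((dS p S i - 1) * m) = int m * (int (dS p S i) - 1)"
    using dS_pos[OF l i] by (simp add: of_nat_diff algebra_simps)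
  moreover have "(dS p S i - 1) * m + 3*n + (cS n p S i + 1)
           \<le> card (err P (X i)) + card (foreign_YS_joined P l) + card (Z_joined P l)
              + card (Y_joined P l)"
    using X_errors_with_XS[OF assms] card_pos_Y_neighbours[OF i_range] by simp
  moreover note XS_error_budget[OF l]
  moreover have "card (Y_joined P l) = card (S l \<inter> Y_joined P l) + card (Y_joined P l - S l)"
    using card_Int_Diff[OF finite_joined(4), where B = "S l"] by (simp add: Int_commute)
  moreover have "card (S l) = card (S l \<inter> Y_joined P l) + card (S l - Y_joined P l)"
    by (rule card_Int_Diff[OF finite_S[OF l]])
  ultimately have "card (S l - Y_joined P l) = 0"
    using card_S[OF l] by linarith
  then show ?thesis
    using finite_S[OF l] by simp
qed

lemma card_YS_missed_le: "l \<in> {1..p} \<Longrightarrow> card (YS_missed P l) \<le> 3"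
  using XS_error_budget[of l] by linarith

lemma card_foreign_YS_joined_le: "l \<in> {1..p} \<Longrightarrow> card (foreign_YS_joined P l) \<le> 3"
  using XS_error_budget[of l] by linarith

text \<open>A \<open>YS a k\<close> in the cluster of \<open>X i\<close> is missed by \<open>XS a\<close>, which misses at most three.\<close>
lemma card_YS_joined_by_X:
  assumes none: "\<forall>l\<in>sets_containing i. \<not> same_cluster P (X i) (XS l)"
  shows "card {(a, k) \<in> sets_containing i \<times> {1..m}. same_cluster P (X i) (YS a k)}
           \<le> card (sets_containing i) * 3"
    (is "card ?J \<le> _")
proof -
  have "?J \<subseteq> Sigma (sets_containing i) (YS_missed P)"
  proof clarify
    fix a k assume "a \<in> sets_containing i" "k \<in> {1..m}" "same_cluster P (X i) (YS a k)"
    moreover from this have "\<not> same_cluster P (XS a) (YS a k)"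
      using none same_cluster_trans[OF partition _ same_cluster_sym] by blast
    ultimately show "k \<in> YS_missed P a"
      by (simp add: YS_missed_def)
  qed
  then have "card ?J \<le> (\<Sum>a\<in>sets_containing i. card (YS_missed P a))"
    using card_mono[of "Sigma (sets_containing i) (YS_missed P)" ?J]
      finite_sets_containing finite_joined(1)
    by simp
  also have "\<dots> \<le> card (sets_containing i) * 3"
    using sum_bounded_above[of "sets_containing i" "\<lambda>a. card (YS_missed P a)" 3] card_YS_missed_le
    by (simp add: sets_containing_def)
  finally show ?thesis .
qed

lemma X_joins_some_XS:
  assumes i_range: "i \<in> {1..3*n}"
  shows "\<exists>l\<in>{1..p}. i \<in> S l \<and> same_cluster P (X i) (XS l)"
proof (rule ccontr)
  assume "\<not> ?thesis"
  then have none: "\<forall>l\<in>sets_containing i. \<not> same_cluster P (X i) (XS l)"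
    by (auto simp: sets_containing_def)
  define T where "T = sets_containing i \<times> {1..m}"
  define J where "J = {(a, k) \<in> T. same_cluster P (X i) (YS a k)}"
  have "(\<lambda>(a, k). YS a k) ` (T - J) \<subseteq> err P (X i)"
    using i_range by (clarsimp simp: mem_err_iff T_def J_def sets_containing_def)
  from card_err_le_tol[OF _ this] have tol_bound:
    "int (card (T - J)) \<le> int m * (int (dS p S i) - 1) + (int (cS n p S i) - 2) + (3 * int n - 3)"
    using i_range by (simp add: card_image_YS)
  have "card J \<le> card (sets_containing i) * 3"
    using card_YS_joined_by_X[OF none] by (simp add: J_def T_def)
  moreover have "card T = card (T - J) + card J"
  proof -
    have "J \<subseteq> T" "finite T"
      by (auto simp: J_def T_def finite_sets_containing)
    then show ?thesis
      using card_Int_Diff[of T J] by (simp add: Int_absorb1)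
  qed
  moreover have "int (card T) = int m * int (dS p S i)"
    by (simp add: T_def card_cartesian_product card_sets_containing)
  moreover have "int m * (int (dS p S i) - 1) = int m * int (dS p S i) - int m"
    by (simp add: algebra_simps)
  moreover have "cS n p S i + 1 \<le> 3*n"
    using card_pos_Y_neighbours[OF i_range] card_pos_Y_neighbours_le[of i] by simp
  ultimately show False
    using tol_bound card_sets_containing[of i] card_sets_containing_le[of i] m_large by linarith
qed

lemma XS_separated:
  assumes l: "l \<in> {1..p}" and l': "l' \<in> {1..p}" and "l \<noteq> l'"
  shows "\<not> same_cluster P (XS l) (XS l')"
proof
  assume cl: "same_cluster P (XS l) (XS l')"
  have "Pair l' ` ({1..m} - YS_missed P l') \<subseteq> foreign_YS_joined P l"
  proof clarify
    fix k assume "k \<in> {1..m}" "k \<notin> YS_missed P l'"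
    then have "same_cluster P (XS l') (YS l' k)"
      by (simp add: YS_missed_def)
    then show "(l', k) \<in> foreign_YS_joined P l"
      using same_cluster_trans[OF partition cl] assms \<open>k \<in> {1..m}\<close>
      by (simp add: foreign_YS_joined_def)
  qed
  from card_mono[OF finite_joined(2) this]
  have "card (Pair l' ` ({1..m} - YS_missed P l')) \<le> 3"
    using card_foreign_YS_joined_le[OF l] by linarith
  moreover have "card (Pair l' ` ({1..m} - YS_missed P l')) = card ({1..m} - YS_missed P l')"
    by (rule card_image) (simp add: inj_on_def)
  moreover have "m - card (YS_missed P l') \<le> card ({1..m} - YS_missed P l')"
    using diff_card_le_card_Diff[OF finite_joined(1), of "{1..m}"] by simp
  ultimately show False
    using card_YS_missed_le[OF l'] m_large n_pos l by simp
qed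

lemma exact_cover_of_tolerant_clustering: "\<exists>I\<subseteq>{1..p}. \<forall>i\<in>{1..3*n}. \<exists>!l. l \<in> I \<and> i \<in> S l"
proof (intro exI conjI ballI)
  let ?I = "{l \<in> {1..p}. \<exists>j\<in>S l. same_cluster P (X j) (XS l)}"
  show "?I \<subseteq> {1..p}"
    by blast
  fix i assume "i \<in> {1..3*n}"
  then obtain l where l: "l \<in> {1..p}" "i \<in> S l" "same_cluster P (X i) (XS l)"
    using X_joins_some_XS by blast
  have Y_i_joined: "same_cluster P (XS l') (Y i)" if "l' \<in> ?I" "i \<in> S l'" for l'
    using that S_subset_Y_joined[of l'] by (auto simp: Y_joined_def)
  show "\<exists>!l. l \<in> ?I \<and> i \<in> S l"
  proof (rule ex1I)
    show "l \<in> ?I \<and> i \<in> S l"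
      using l by blast
    fix l' assume l': "l' \<in> ?I \<and> i \<in> S l'"
    then have "same_cluster P (XS l') (XS l)"
      using Y_i_joined l same_cluster_trans[OF partition _ same_cluster_sym] by blast
    then show "l' = l"
      using XS_separated l l' by blast
  qed
qed

end

subsection \<open>From an exact cover to a tolerant clustering\<close>

fun cluster_label :: "(nat \<Rightarrow> nat) \<Rightarrow> vtx \<Rightarrow> nat" where
  "cluster_label f (X i) = f i"
| "cluster_label f (Y i) = f i"
| "cluster_label f (Z i) = f i"
| "cluster_label f (XS l) = l"
| "cluster_label f (YS l k) = l"

context
  fixes I
  assumes I_subset: "I \<subseteq> {1..p}" and exact_cover: "\<forall>i\<in>{1..3*n}. \<exists>!l. l \<in> I \<and> i \<in> S l"
begin

definition cover_member :: "nat \<Rightarrow> nat" where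
  "cover_member i = (THE l. l \<in> I \<and> i \<in> S l)"

definition cover_clustering :: "vtx set set" where
  "cover_clustering = (\<lambda>l. {v \<in> V. cluster_label cover_member v = l}) ` {1..p}"

lemma cover_member: "i \<in> {1..3*n} \<Longrightarrow> cover_member i \<in> I \<and> i \<in> S (cover_member i)"
  unfolding cover_member_def using exact_cover by (metis (mono_tags, lifting) theI')

lemma cover_member_eq_iff: "i \<in> {1..3*n} \<Longrightarrow> l \<in> I \<Longrightarrow> cover_member i = l \<longleftrightarrow> i \<in> S l"
  using cover_member exact_cover by metis

lemma cluster_label_range: "cluster_label cover_member ` V = {1..p}"
proof
  show "cluster_label cover_member ` V \<subseteq> {1..p}"
  proof clarify
    fix v assume "v \<in> V"
    then show "cluster_label cover_member v \<in> {1..p}"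
      using cover_member I_subset by (cases v) (auto simp del: atLeastAtMost_iff)
  qed
  show "{1..p} \<subseteq> cluster_label cover_member ` V"
    by (force intro: rev_image_eqI[of "XS _"])
qed

lemma partition_cover_clustering: "partition_on V cover_clustering"
  unfolding cover_clustering_def by (rule partition_on_fibres[OF cluster_label_range])

lemma mem_err_cover_clustering_iff:
  "v \<in> V1 n p \<Longrightarrow> w \<in> err cover_clustering v \<longleftrightarrow>
     w \<in> V2 n p m \<and> (posG p S v w \<longleftrightarrow> cluster_label cover_member v \<noteq> cluster_label cover_member w)"
  unfolding mem_err_iff cover_clustering_def
  using same_cluster_fibres[OF equalityD1[OF cluster_label_range]] by auto

lemma err_chosen_XS: "l \<in> I \<Longrightarrow> err cover_clustering (XS l) \<subseteq> Z ` S l"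
proof
  fix w assume l: "l \<in> I" and w: "w \<in> err cover_clustering (XS l)"
  with I_subset have "w \<in> V2 n p m"
    "posG p S (XS l) w \<longleftrightarrow> cluster_label cover_member w \<noteq> l"
    by (auto simp: mem_err_cover_clustering_iff)
  then show "w \<in> Z ` S l"
    using l cover_member_eq_iff by (cases w) auto
qed

lemma err_unchosen_XS: "l \<in> {1..p} \<Longrightarrow> l \<notin> I \<Longrightarrow> err cover_clustering (XS l) \<subseteq> Y ` S l"
proof
  fix w assume l: "l \<in> {1..p}" "l \<notin> I" and w: "w \<in> err cover_clustering (XS l)"
  then have "w \<in> V2 n p m"
    "posG p S (XS l) w \<longleftrightarrow> cluster_label cover_member w \<noteq> l"
    by (auto simp: mem_err_cover_clustering_iff)
  then show "w \<in> Y ` S l"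
    using l cover_member by (cases w) fastforce+
qed

lemma err_X:
  assumes i: "i \<in> {1..3*n}"
  shows "err cover_clustering (X i)
    \<subseteq> Y ` (pos_Y_neighbours i - S (cover_member i))
      \<union> (\<lambda>(a, k). YS a k) ` ((sets_containing i - {cover_member i}) \<times> {1..m})
      \<union> Z ` ({1..3*n} - S (cover_member i))"
proof
  fix w assume w: "w \<in> err cover_clustering (X i)"
  with i have "w \<in> V2 n p m"
    "posG p S (X i) w \<longleftrightarrow> cluster_label cover_member w \<noteq> cover_member i"
    by (auto simp: mem_err_cover_clustering_iff)
  then show "w \<in> Y ` (pos_Y_neighbours i - S (cover_member i))
      \<union> (\<lambda>(a, k). YS a k) ` ((sets_containing i - {cover_member i}) \<times> {1..m})
      \<union> Z ` ({1..3*n} - S (cover_member i))"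
    using i cover_member[OF i] cover_member_eq_iff I_subset
    by (cases w) (auto simp: pos_Y_neighbours_def sets_containing_def)
qed

lemma errors_cover_clustering_XS:
  assumes l: "l \<in> {1..p}"
  shows "errors cover_clustering (XS l) \<le> 3"
proof -
  have "err cover_clustering (XS l) \<subseteq> (if l \<in> I then Z ` S l else Y ` S l)"
    using err_chosen_XS err_unchosen_XS l by auto
  then have "errors cover_clustering (XS l) \<le> card (if l \<in> I then Z ` S l else Y ` S l)"
    by (rule errors_at_le_card[rotated]) (simp add: finite_S[OF l])
  also have "\<dots> = 3"
    using card_S[OF l] by (simp add: card_image inj_on_def)
  finally show ?thesis .
qed

lemma errors_cover_clustering_X:
  assumes i: "i \<in> {1..3*n}"
  shows "int (errors cover_clustering (X i)) \<le> tol n p m S (X i)"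
proof -
  define f where "f = cover_member i"
  have f: "f \<in> {1..p}" "i \<in> S f"
    using cover_member[OF i] I_subset by (auto simp: f_def)
  have "errors cover_clustering (X i)
      \<le> card (Y ` (pos_Y_neighbours i - S f)
              \<union> (\<lambda>(a, k). YS a k) ` ((sets_containing i - {f}) \<times> {1..m})
              \<union> Z ` ({1..3*n} - S f))"
    by (rule errors_at_le_card[OF _ err_X[OF i, folded f_def]])
      (simp add: finite_pos_Y_neighbours finite_sets_containing)
  also have "\<dots> = card (pos_Y_neighbours i - S f) + card ((sets_containing i - {f}) \<times> {1..m})
      + card ({1..3*n} - S f)"
    using finite_pos_Y_neighbours finite_sets_containing
    by (subst card_Un_disjoint; auto simp: card_image inj_on_def card_image_YS)+
  also have "\<dots> = (card (pos_Y_neighbours i) - 3) + (dS p S i - 1) * m + (3*n - 3)"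
    using f S_subset_pos_Y_neighbours[OF f] S_subset[OF f(1)] card_S[OF f(1)] finite_S[OF f(1)]
    by (simp add: card_Diff_subset card_cartesian_product finite_sets_containing sets_containing_def
        flip: card_sets_containing)
  finally have "errors cover_clustering (X i)
      \<le> (card (pos_Y_neighbours i) - 3) + (dS p S i - 1) * m + (3*n - 3)" .
  moreover have "card (pos_Y_neighbours i) \<ge> 3"
    using card_mono[OF finite_pos_Y_neighbours S_subset_pos_Y_neighbours[OF f]] card_S[OF f(1)]
    by simp
  then have "int (card (pos_Y_neighbours i) - 3) = int (cS n p S i) - 2"
    using card_pos_Y_neighbours[OF i] by simp
  moreover have "int ((dS p S i - 1) * m) = int m * (int (dS p S i) - 1)"
    using dS_pos[OF f] by (simp add: of_nat_diff algebra_simps)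
  moreover have "int (3*n - 3) = 3 * int n - 3"
    using n_pos by simp
  ultimately show ?thesis
    unfolding tol.simps by linarith
qed

lemma tolerant_cover_clustering: "tolerant cover_clustering"
proof
  fix v assume "v \<in> V1 n p"
  then consider (X) i where "v = X i" "i \<in> {1..3*n}" | (XS) l where "v = XS l" "l \<in> {1..p}"
    by (auto simp: V1_def)
  then show "int (errors cover_clustering v) \<le> tol n p m S v"
    by cases (use errors_cover_clustering_X errors_cover_clustering_XS in auto)
qed

end

end

theorem corollary2:
  fixes n p m :: nat and S :: "nat \<Rightarrow> nat set"
  assumes "n \<ge> 1" and "p \<ge> 1"
    and "\<forall>l\<in>{1..p}. S l \<subseteq> {1..3*n} \<and> card (S l) = 3"
    and "inj_on S {1..p}"
    and "m \<ge> 6*n + 3*p"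
  shows "(\<exists>P. partition_on (V1 n p \<union> V2 n p m) P \<and>
            (\<forall>v\<in>V1 n p. int (errors_at (V1 n p \<union> V2 n p m) (adjG n p m) (posG p S) P v)
                            \<le> tol n p m S v))
         \<longleftrightarrow> (\<exists>I\<subseteq>{1..p}. \<forall>i\<in>{1..3*n}. \<exists>!l. l \<in> I \<and> i \<in> S l)"
proof -
  interpret x3c_reduction n p m S
    using assms by unfold_locales auto
  show ?thesis
  proof
    assume "\<exists>P. partition_on V P \<and> tolerant P"
    then show "\<exists>I\<subseteq>{1..p}. \<forall>i\<in>{1..3*n}. \<exists>!l. l \<in> I \<and> i \<in> S l"
      using exact_cover_of_tolerant_clustering by blast
  next
    assume "\<exists>I\<subseteq>{1..p}. \<forall>i\<in>{1..3*n}. \<exists>!l. l \<in> I \<and> i \<in> S l"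
    then show "\<exists>P. partition_on V P \<and> tolerant P"
      using partition_cover_clustering tolerant_cover_clustering by blast
  qed
qed

end
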